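(* If $(\mathbf M,\tau)$ is a subdirectly irreducible state BL-algebra, then $\tau(M)$ and $\mathrm{Ker}(\tau)$ are linearly ordered.
   Context: A BL-algebra is an algebra $\mathbf M=(M;\wedge,\vee,\odot,\to,0,1)$ of type $\langle 2,2,2,2,0,0\rangle$ such that $(M;\wedge,\vee,0,1)$ is a bounded lattice, $(M;\odot,1)$ is a commutative monoid, and for all $a,b,c$: $c\le a\to b$ iff $a\odot c\le b$; $a\wedge b=a\odot(a\to b)$; $(a\to b)\vee(b\to a)=1$. A state-operator on $\mathbf M$ is a map $\tau:M\to M$ such that for all $x,y$: $\tau(0)=0$; $\tau(x\to y)=\tau(x)\to\tau(x\wedge y)$; $\tau(x\odot y)=\tau(x)\odot\tau(x\to(x\odot y))$; $\tau(\tau(x)\odot\tau(y))=\tau(x)\odot\tau(y)$; $\tau(\tau(x)\to\tau(y))=\tau(x)\to\tau(y)$; $(\mathbf M,\tau)$ is then a state BL-algebra, regarded as an algebra with the extra unary operation $\tau$, and subdirect irreducibility refers to this algebra. $\mathrm{Ker}(\tau)=\{a\in M:\tau(a)=1\}$. *)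

theory Defs
  imports Main
begin

definition bl_le :: "('a \<Rightarrow> 'a \<Rightarrow> 'a) \<Rightarrow> 'a \<Rightarrow> 'a \<Rightarrow> bool" where
  "bl_le meet x y \<longleftrightarrow> meet x y = x"

definition bl_algebra ::
  "'a set \<Rightarrow> ('a \<Rightarrow> 'a \<Rightarrow> 'a) \<Rightarrow> ('a \<Rightarrow> 'a \<Rightarrow> 'a) \<Rightarrow> ('a \<Rightarrow> 'a \<Rightarrow> 'a)
    \<Rightarrow> ('a \<Rightarrow> 'a \<Rightarrow> 'a) \<Rightarrow> 'a \<Rightarrow> 'a \<Rightarrow> bool" where
  "bl_algebra M meet join mult imp zero one \<longleftrightarrow>
     zero \<in> M \<and> one \<in> M \<and>
     (\<forall>x\<in>M. \<forall>y\<in>M. meet x y \<in> M \<and> join x y \<in> M \<and> mult x y \<in> M \<and> imp x y \<in> M) \<and>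
     \<comment> \<open>bounded lattice\<close>
     (\<forall>x\<in>M. \<forall>y\<in>M. meet x y = meet y x \<and> join x y = join y x) \<and>
     (\<forall>x\<in>M. \<forall>y\<in>M. \<forall>z\<in>M. meet (meet x y) z = meet x (meet y z) \<and>
                              join (join x y) z = join x (join y z)) \<and>
     (\<forall>x\<in>M. \<forall>y\<in>M. meet x (join x y) = x \<and> join x (meet x y) = x) \<and>
     (\<forall>x\<in>M. meet x zero = zero \<and> join x one = one) \<and>
     \<comment> \<open>commutative monoid\<close>
     (\<forall>x\<in>M. \<forall>y\<in>M. \<forall>z\<in>M. mult (mult x y) z = mult x (mult y z)) \<and>
     (\<forall>x\<in>M. \<forall>y\<in>M. mult x y = mult y x) \<and>
     (\<forall>x\<in>M. mult x one = x) \<and>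
     \<comment> \<open>residuation\<close>
     (\<forall>a\<in>M. \<forall>b\<in>M. \<forall>c\<in>M. bl_le meet c (imp a b) \<longleftrightarrow> bl_le meet (mult a c) b) \<and>
     \<comment> \<open>divisibility\<close>
     (\<forall>a\<in>M. \<forall>b\<in>M. meet a b = mult a (imp a b)) \<and>
     \<comment> \<open>prelinearity\<close>
     (\<forall>a\<in>M. \<forall>b\<in>M. join (imp a b) (imp b a) = one)"

definition state_operator ::
  "'a set \<Rightarrow> ('a \<Rightarrow> 'a \<Rightarrow> 'a) \<Rightarrow> ('a \<Rightarrow> 'a \<Rightarrow> 'a) \<Rightarrow> ('a \<Rightarrow> 'a \<Rightarrow> 'a)
    \<Rightarrow> 'a \<Rightarrow> ('a \<Rightarrow> 'a) \<Rightarrow> bool" where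
  "state_operator M meet mult imp zero \<tau> \<longleftrightarrow>
     (\<forall>x\<in>M. \<tau> x \<in> M) \<and>
     \<tau> zero = zero \<and>
     (\<forall>x\<in>M. \<forall>y\<in>M. \<tau> (imp x y) = imp (\<tau> x) (\<tau> (meet x y))) \<and>
     (\<forall>x\<in>M. \<forall>y\<in>M. \<tau> (mult x y) = mult (\<tau> x) (\<tau> (imp x (mult x y)))) \<and>
     (\<forall>x\<in>M. \<forall>y\<in>M. \<tau> (mult (\<tau> x) (\<tau> y)) = mult (\<tau> x) (\<tau> y)) \<and>
     (\<forall>x\<in>M. \<forall>y\<in>M. \<tau> (imp (\<tau> x) (\<tau> y)) = imp (\<tau> x) (\<tau> y))"

definition state_bl_algebra ::
  "'a set \<Rightarrow> ('a \<Rightarrow> 'a \<Rightarrow> 'a) \<Rightarrow> ('a \<Rightarrow> 'a \<Rightarrow> 'a) \<Rightarrow> ('a \<Rightarrow> 'a \<Rightarrow> 'a)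
    \<Rightarrow> ('a \<Rightarrow> 'a \<Rightarrow> 'a) \<Rightarrow> 'a \<Rightarrow> 'a \<Rightarrow> ('a \<Rightarrow> 'a) \<Rightarrow> bool" where
  "state_bl_algebra M meet join mult imp zero one \<tau> \<longleftrightarrow>
     bl_algebra M meet join mult imp zero one \<and> state_operator M meet mult imp zero \<tau>"

definition sbl_congruence ::
  "'a set \<Rightarrow> ('a \<Rightarrow> 'a \<Rightarrow> 'a) \<Rightarrow> ('a \<Rightarrow> 'a \<Rightarrow> 'a) \<Rightarrow> ('a \<Rightarrow> 'a \<Rightarrow> 'a)
    \<Rightarrow> ('a \<Rightarrow> 'a \<Rightarrow> 'a) \<Rightarrow> ('a \<Rightarrow> 'a) \<Rightarrow> ('a \<times> 'a) set \<Rightarrow> bool" where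
  "sbl_congruence M meet join mult imp \<tau> \<theta> \<longleftrightarrow>
     equiv M \<theta> \<and>
     (\<forall>a b c d. (a, b) \<in> \<theta> \<longrightarrow> (c, d) \<in> \<theta> \<longrightarrow>
        (meet a c, meet b d) \<in> \<theta> \<and> (join a c, join b d) \<in> \<theta> \<and>
        (mult a c, mult b d) \<in> \<theta> \<and> (imp a c, imp b d) \<in> \<theta>) \<and>
     (\<forall>a b. (a, b) \<in> \<theta> \<longrightarrow> (\<tau> a, \<tau> b) \<in> \<theta>)"

text \<open>Subdirectly irreducible: there are distinct a, b such that (a,b) lies in every
  congruence other than the identity (equivalently: |M| > 1 and the intersection of all
  nontrivial congruences is not the identity, i.e. a monolith exists).\<close>
definition sbl_subdirectly_irreducible ::
  "'a set \<Rightarrow> ('a \<Rightarrow> 'a \<Rightarrow> 'a) \<Rightarrow> ('a \<Rightarrow> 'a \<Rightarrow> 'a) \<Rightarrow> ('a \<Rightarrow> 'a \<Rightarrow> 'a)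
    \<Rightarrow> ('a \<Rightarrow> 'a \<Rightarrow> 'a) \<Rightarrow> ('a \<Rightarrow> 'a) \<Rightarrow> bool" where
  "sbl_subdirectly_irreducible M meet join mult imp \<tau> \<longleftrightarrow>
     (\<exists>a\<in>M. \<exists>b\<in>M. a \<noteq> b \<and>
        (\<forall>\<theta>. sbl_congruence M meet join mult imp \<tau> \<theta> \<and> \<theta> \<noteq> Id_on M \<longrightarrow> (a, b) \<in> \<theta>))"

definition state_kernel :: "'a set \<Rightarrow> 'a \<Rightarrow> ('a \<Rightarrow> 'a) \<Rightarrow> 'a set" where
  "state_kernel M one \<tau> = {a \<in> M. \<tau> a = one}"

definition linearly_ordered_subset :: "('a \<Rightarrow> 'a \<Rightarrow> 'a) \<Rightarrow> 'a set \<Rightarrow> bool" where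
  "linearly_ordered_subset meet S \<longleftrightarrow> (\<forall>x\<in>S. \<forall>y\<in>S. bl_le meet x y \<or> bl_le meet y x)"

end

theory Submission
  imports Defs
begin

text \<open>A filter F of a BL-algebra that is closed under \<open>\<tau>\<close> induces the congruence
  \<open>x \<equiv> y \<longleftrightarrow> x \<rightarrow> y, y \<rightarrow> x \<in> F\<close>, which differs from the identity as soon as \<open>F \<noteq> {1}\<close>.
  If \<open>a \<or> b = 1\<close>, then every power of a joins every power of b to 1, so the filters
  generated by a and b meet only in 1 and their congruences meet in the identity.
  In a subdirectly irreducible algebra one of the two congruences is therefore the identity,
  i.e. \<open>a = 1\<close> or \<open>b = 1\<close>. By prelinearity this applies to \<open>a = x \<rightarrow> y\<close>, \<open>b = y \<rightarrow> x\<close>,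
  giving \<open>x \<le> y\<close> or \<open>y \<le> x\<close>, as long as both generated filters are \<open>\<tau>\<close>-closed. They are
  when a and b are fixed by \<open>\<tau>\<close> (for \<open>x, y \<in> \<tau>(M)\<close>) or lie in \<open>Ker(\<tau>)\<close>.\<close>

lemma trans_compatible_binary:
  assumes "trans \<theta>" "\<theta> \<subseteq> M \<times> M"
    and "\<And>a b c. (a, b) \<in> \<theta> \<Longrightarrow> c \<in> M \<Longrightarrow> (f a c, f b c) \<in> \<theta>"
    and "\<And>a c d. a \<in> M \<Longrightarrow> (c, d) \<in> \<theta> \<Longrightarrow> (f a c, f a d) \<in> \<theta>"
    and "(a, b) \<in> \<theta>" "(c, d) \<in> \<theta>"
  shows "(f a c, f b d) \<in> \<theta>"
proof -
  have "b \<in> M" "c \<in> M"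
    using assms(2,5,6) by auto
  then have "(f a c, f b c) \<in> \<theta>" "(f b c, f b d) \<in> \<theta>"
    using assms(3-6) by blast+
  then show ?thesis
    using transD[OF assms(1)] by blast
qed

locale bl_alg =
  fixes M :: "'a set"
    and meet join :: "'a \<Rightarrow> 'a \<Rightarrow> 'a"
    and mult (infixl "\<odot>" 70)
    and imp (infixr "\<rightarrow>" 60)
    and zero one :: 'a
  assumes zero_closed [simp]: "zero \<in> M"
    and one_closed [simp]: "one \<in> M"
    and meet_closed [simp]: "x \<in> M \<Longrightarrow> y \<in> M \<Longrightarrow> meet x y \<in> M"
    and join_closed [simp]: "x \<in> M \<Longrightarrow> y \<in> M \<Longrightarrow> join x y \<in> M"
    and mult_closed [simp]: "x \<in> M \<Longrightarrow> y \<in> M \<Longrightarrow> x \<odot> y \<in> M"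
    and imp_closed [simp]: "x \<in> M \<Longrightarrow> y \<in> M \<Longrightarrow> x \<rightarrow> y \<in> M"
    and meet_commute: "x \<in> M \<Longrightarrow> y \<in> M \<Longrightarrow> meet x y = meet y x"
    and join_commute: "x \<in> M \<Longrightarrow> y \<in> M \<Longrightarrow> join x y = join y x"
    and meet_assoc: "x \<in> M \<Longrightarrow> y \<in> M \<Longrightarrow> z \<in> M \<Longrightarrow> meet (meet x y) z = meet x (meet y z)"
    and join_assoc: "x \<in> M \<Longrightarrow> y \<in> M \<Longrightarrow> z \<in> M \<Longrightarrow> join (join x y) z = join x (join y z)"
    and meet_join_absorb: "x \<in> M \<Longrightarrow> y \<in> M \<Longrightarrow> meet x (join x y) = x"
    and join_meet_absorb: "x \<in> M \<Longrightarrow> y \<in> M \<Longrightarrow> join x (meet x y) = x"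
    and join_one: "x \<in> M \<Longrightarrow> join x one = one"
    and mult_assoc: "x \<in> M \<Longrightarrow> y \<in> M \<Longrightarrow> z \<in> M \<Longrightarrow> x \<odot> y \<odot> z = x \<odot> (y \<odot> z)"
    and mult_commute: "x \<in> M \<Longrightarrow> y \<in> M \<Longrightarrow> x \<odot> y = y \<odot> x"
    and mult_one: "x \<in> M \<Longrightarrow> x \<odot> one = x"
    and residuation:
      "a \<in> M \<Longrightarrow> b \<in> M \<Longrightarrow> c \<in> M \<Longrightarrow> bl_le meet c (a \<rightarrow> b) \<longleftrightarrow> bl_le meet (a \<odot> c) b"
    and divisibility: "a \<in> M \<Longrightarrow> b \<in> M \<Longrightarrow> meet a b = a \<odot> (a \<rightarrow> b)"
    and prelinearity: "a \<in> M \<Longrightarrow> b \<in> M \<Longrightarrow> join (a \<rightarrow> b) (b \<rightarrow> a) = one"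
begin

abbreviation le (infix "\<preceq>" 50) where "x \<preceq> y \<equiv> bl_le meet x y"

lemma meet_idem: "x \<in> M \<Longrightarrow> meet x x = x"
  by (metis meet_join_absorb join_meet_absorb meet_closed)

lemma le_refl: "x \<in> M \<Longrightarrow> x \<preceq> x"
  by (simp add: bl_le_def meet_idem)

lemma le_trans: "x \<in> M \<Longrightarrow> y \<in> M \<Longrightarrow> z \<in> M \<Longrightarrow> x \<preceq> y \<Longrightarrow> y \<preceq> z \<Longrightarrow> x \<preceq> z"
  unfolding bl_le_def by (metis meet_assoc)

lemma le_antisym: "x \<in> M \<Longrightarrow> y \<in> M \<Longrightarrow> x \<preceq> y \<Longrightarrow> y \<preceq> x \<Longrightarrow> x = y"
  unfolding bl_le_def by (metis meet_commute)

lemma le_iff_join: "x \<in> M \<Longrightarrow> y \<in> M \<Longrightarrow> x \<preceq> y \<longleftrightarrow> join x y = y"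
  unfolding bl_le_def by (metis meet_join_absorb join_meet_absorb meet_commute join_commute)

lemma le_one: "x \<in> M \<Longrightarrow> x \<preceq> one"
  by (simp add: le_iff_join join_one)

lemma one_le_iff: "x \<in> M \<Longrightarrow> one \<preceq> x \<longleftrightarrow> x = one"
  by (metis le_antisym le_one le_refl one_closed)

lemma meet_le1: "x \<in> M \<Longrightarrow> y \<in> M \<Longrightarrow> meet x y \<preceq> x"
  unfolding bl_le_def by (metis meet_assoc meet_commute meet_idem)

lemma meet_le2: "x \<in> M \<Longrightarrow> y \<in> M \<Longrightarrow> meet x y \<preceq> y"
  unfolding bl_le_def by (metis meet_assoc meet_idem)

lemma meet_greatest: "x \<in> M \<Longrightarrow> y \<in> M \<Longrightarrow> z \<in> M \<Longrightarrow> z \<preceq> x \<Longrightarrow> z \<preceq> y \<Longrightarrow> z \<preceq> meet x y"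
  unfolding bl_le_def by (metis meet_assoc)

lemma join_ge1: "x \<in> M \<Longrightarrow> y \<in> M \<Longrightarrow> x \<preceq> join x y"
  by (simp add: bl_le_def meet_join_absorb)

lemma join_ge2: "x \<in> M \<Longrightarrow> y \<in> M \<Longrightarrow> y \<preceq> join x y"
  using join_ge1 join_commute by metis

lemma join_least: "x \<in> M \<Longrightarrow> y \<in> M \<Longrightarrow> z \<in> M \<Longrightarrow> x \<preceq> z \<Longrightarrow> y \<preceq> z \<Longrightarrow> join x y \<preceq> z"
  by (simp add: le_iff_join join_assoc)

lemma residuation_commuted: "a \<in> M \<Longrightarrow> b \<in> M \<Longrightarrow> c \<in> M \<Longrightarrow> c \<preceq> a \<rightarrow> b \<longleftrightarrow> c \<odot> a \<preceq> b"
  using residuation mult_commute by simp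

lemma le_iff_imp_eq_one: "x \<in> M \<Longrightarrow> y \<in> M \<Longrightarrow> x \<preceq> y \<longleftrightarrow> x \<rightarrow> y = one"
  using residuation[of x y one] one_le_iff by (simp add: mult_one)

lemma imp_refl: "x \<in> M \<Longrightarrow> x \<rightarrow> x = one"
  using le_iff_imp_eq_one le_refl by simp

lemma imp_one: "x \<in> M \<Longrightarrow> x \<rightarrow> one = one"
  using le_iff_imp_eq_one le_one by simp

lemma mult_imp_le: "x \<in> M \<Longrightarrow> y \<in> M \<Longrightarrow> x \<odot> (x \<rightarrow> y) \<preceq> y"
  using residuation[of x y "x \<rightarrow> y"] le_refl by simp

lemma mult_mono_left: "x \<in> M \<Longrightarrow> y \<in> M \<Longrightarrow> z \<in> M \<Longrightarrow> x \<preceq> y \<Longrightarrow> x \<odot> z \<preceq> y \<odot> z"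
  by (metis residuation le_refl le_trans imp_closed mult_closed mult_commute)

lemma mult_mono: "x \<in> M \<Longrightarrow> y \<in> M \<Longrightarrow> u \<in> M \<Longrightarrow> v \<in> M \<Longrightarrow> x \<preceq> y \<Longrightarrow> u \<preceq> v \<Longrightarrow> x \<odot> u \<preceq> y \<odot> v"
  by (metis mult_mono_left mult_commute le_trans mult_closed)

lemma mult_le_left: "x \<in> M \<Longrightarrow> y \<in> M \<Longrightarrow> x \<odot> y \<preceq> x"
  using mult_mono[of x x y one] le_refl le_one mult_one by simp

lemma mult_le_right: "x \<in> M \<Longrightarrow> y \<in> M \<Longrightarrow> x \<odot> y \<preceq> y"
  using mult_le_left mult_commute by metis

lemma le_imp: "x \<in> M \<Longrightarrow> y \<in> M \<Longrightarrow> y \<preceq> x \<rightarrow> y"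
  using residuation mult_le_right by simp

lemma one_imp: "x \<in> M \<Longrightarrow> one \<rightarrow> x = x"
  by (metis le_antisym le_imp mult_imp_le mult_commute mult_one imp_closed one_closed)

lemma imp_mono_right: "x \<in> M \<Longrightarrow> y \<in> M \<Longrightarrow> z \<in> M \<Longrightarrow> x \<preceq> y \<Longrightarrow> z \<rightarrow> x \<preceq> z \<rightarrow> y"
  by (meson residuation mult_imp_le le_trans imp_closed mult_closed)

lemma imp_comp: "x \<in> M \<Longrightarrow> y \<in> M \<Longrightarrow> z \<in> M \<Longrightarrow> (x \<rightarrow> y) \<odot> (y \<rightarrow> z) \<preceq> x \<rightarrow> z"
proof -
  assume M: "x \<in> M" "y \<in> M" "z \<in> M"
  have "x \<odot> ((x \<rightarrow> y) \<odot> (y \<rightarrow> z)) = x \<odot> (x \<rightarrow> y) \<odot> (y \<rightarrow> z)"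
    using M mult_assoc by simp
  moreover have "x \<odot> (x \<rightarrow> y) \<odot> (y \<rightarrow> z) \<preceq> y \<odot> (y \<rightarrow> z)"
    using M mult_mono_left mult_imp_le by simp
  ultimately have "x \<odot> ((x \<rightarrow> y) \<odot> (y \<rightarrow> z)) \<preceq> z"
    using M mult_imp_le le_trans by (metis imp_closed mult_closed)
  then show ?thesis
    using M residuation by simp
qed


lemma join_mult_le:
  assumes M: "x \<in> M" "y \<in> M" "z \<in> M"
  shows "join x y \<odot> join x z \<preceq> join x (y \<odot> z)"
proof -
  define J where "J = join x (y \<odot> z)"
  have J: "J \<in> M" "x \<preceq> J" "y \<odot> z \<preceq> J"
    using M join_ge1 join_ge2 by (simp_all add: J_def)
  have mult_x_le: "u \<odot> x \<preceq> J" if "u \<in> M" for u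
    using that M J mult_le_right le_trans by (metis mult_closed)
  have "x \<preceq> y \<rightarrow> J" "z \<preceq> y \<rightarrow> J"
    using M J mult_x_le residuation by simp_all
  then have "join x z \<preceq> y \<rightarrow> J"
    using M J join_least by simp
  then have "y \<preceq> join x z \<rightarrow> J"
    using M J residuation mult_commute by (metis join_closed)
  moreover have "x \<preceq> join x z \<rightarrow> J"
    using M J mult_x_le residuation by simp
  ultimately have "join x y \<preceq> join x z \<rightarrow> J"
    using M J join_least by simp
  then show ?thesis
    using M J residuation mult_commute unfolding J_def by (metis join_closed)
qed

lemma imp_le_imp_meet: "x \<in> M \<Longrightarrow> y \<in> M \<Longrightarrow> z \<in> M \<Longrightarrow> x \<rightarrow> y \<preceq> meet x z \<rightarrow> meet y z"
proof -
  assume M: "x \<in> M" "y \<in> M" "z \<in> M"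
  let ?u = "meet x z \<odot> (x \<rightarrow> y)"
  have "?u \<preceq> x \<odot> (x \<rightarrow> y)"
    using M mult_mono_left meet_le1 by simp
  then have "?u \<preceq> y"
    using M mult_imp_le le_trans by (metis imp_closed meet_closed mult_closed)
  moreover have "?u \<preceq> z"
    using M mult_le_left meet_le2 le_trans by (metis imp_closed meet_closed mult_closed)
  ultimately show ?thesis
    using M meet_greatest residuation by simp
qed

lemma imp_le_imp_join: "x \<in> M \<Longrightarrow> y \<in> M \<Longrightarrow> z \<in> M \<Longrightarrow> x \<rightarrow> y \<preceq> join x z \<rightarrow> join y z"
proof -
  assume M: "x \<in> M" "y \<in> M" "z \<in> M"
  let ?a = "x \<rightarrow> y" and ?J = "join y z"
  have "x \<odot> ?a \<preceq> ?J"
    using M mult_imp_le[of x y] join_ge1[of y z] le_trans[of "x \<odot> ?a" y ?J] by simp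
  then have "x \<preceq> ?a \<rightarrow> ?J"
    using M residuation_commuted[of ?a ?J x] by simp
  moreover have "?a \<odot> z \<preceq> ?J"
    using M mult_le_right[of ?a z] join_ge2[of y z] le_trans[of "?a \<odot> z" z ?J] by simp
  then have "z \<preceq> ?a \<rightarrow> ?J"
    using M residuation[of ?a ?J z] by simp
  ultimately have "join x z \<preceq> ?a \<rightarrow> ?J"
    using M join_least by simp
  then show ?thesis
    using M residuation_commuted[of ?a ?J "join x z"] residuation[of "join x z" ?J ?a] by simp
qed

lemma imp_le_imp_mult: "x \<in> M \<Longrightarrow> y \<in> M \<Longrightarrow> z \<in> M \<Longrightarrow> x \<rightarrow> y \<preceq> x \<odot> z \<rightarrow> y \<odot> z"
proof -
  assume M: "x \<in> M" "y \<in> M" "z \<in> M"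
  have "x \<odot> z \<odot> (x \<rightarrow> y) = x \<odot> (x \<rightarrow> y) \<odot> z"
    using M by (simp add: mult_assoc mult_commute[of z])
  also have "\<dots> \<preceq> y \<odot> z"
    using M mult_mono_left mult_imp_le by simp
  finally show ?thesis
    using M residuation by simp
qed

lemma imp_le_imp_imp_left: "x \<in> M \<Longrightarrow> y \<in> M \<Longrightarrow> z \<in> M \<Longrightarrow> x \<rightarrow> y \<preceq> (y \<rightarrow> z) \<rightarrow> (x \<rightarrow> z)"
  using imp_comp[of x y z] residuation_commuted[of "y \<rightarrow> z" "x \<rightarrow> z" "x \<rightarrow> y"] by simp

lemma imp_le_imp_imp_right: "x \<in> M \<Longrightarrow> y \<in> M \<Longrightarrow> z \<in> M \<Longrightarrow> x \<rightarrow> y \<preceq> (z \<rightarrow> x) \<rightarrow> (z \<rightarrow> y)"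
  using imp_comp[of z x y] residuation[of "z \<rightarrow> x" "z \<rightarrow> y" "x \<rightarrow> y"] by simp

primrec pow :: "'a \<Rightarrow> nat \<Rightarrow> 'a" where
  "pow a 0 = one"
| "pow a (Suc n) = a \<odot> pow a n"

lemma pow_closed [simp]: "a \<in> M \<Longrightarrow> pow a n \<in> M"
  by (induction n) simp_all

lemma pow_add: "a \<in> M \<Longrightarrow> pow a (n + m) = pow a n \<odot> pow a m"
  by (induction n) (simp_all add: mult_assoc mult_commute[of one] mult_one)

lemma join_pow_right_eq_one:
  assumes "a \<in> M" "b \<in> M" "join a b = one"
  shows "join a (pow b n) = one"
proof (induction n)
  case 0
  show ?case using assms join_one by simp
next
  case (Suc n)
  have "join a b \<odot> join a (pow b n) \<preceq> join a (pow b (Suc n))"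
    using assms join_mult_le[of a b "pow b n"] by simp
  then show ?case
    using assms Suc.IH one_le_iff by (simp add: mult_one)
qed

lemma join_pow_eq_one:
  assumes "a \<in> M" "b \<in> M" "join a b = one"
  shows "join (pow a n) (pow b m) = one"
proof -
  have "join (pow b m) a = one"
    using assms join_pow_right_eq_one join_commute[of a "pow b m"] by simp
  then have "join (pow b m) (pow a n) = one"
    using assms join_pow_right_eq_one[of "pow b m" a] by simp
  then show ?thesis
    using assms join_commute[of "pow a n" "pow b m"] by simp
qed

definition is_filter :: "'a set \<Rightarrow> bool" where
  "is_filter F \<longleftrightarrow> F \<subseteq> M \<and> one \<in> F \<and> (\<forall>x\<in>F. \<forall>y\<in>M. x \<preceq> y \<longrightarrow> y \<in> F) \<and>
     (\<forall>x\<in>F. \<forall>y\<in>F. x \<odot> y \<in> F)"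

definition filter_congruence :: "'a set \<Rightarrow> ('a \<times> 'a) set" where
  "filter_congruence F = {(x, y). x \<in> M \<and> y \<in> M \<and> x \<rightarrow> y \<in> F \<and> y \<rightarrow> x \<in> F}"

lemma filter_upward: "is_filter F \<Longrightarrow> x \<in> F \<Longrightarrow> y \<in> M \<Longrightarrow> x \<preceq> y \<Longrightarrow> y \<in> F"
  unfolding is_filter_def by blast

lemma filter_imp_trans:
  assumes F: "is_filter F" and M: "x \<in> M" "y \<in> M" "z \<in> M" and "x \<rightarrow> y \<in> F" "y \<rightarrow> z \<in> F"
  shows "x \<rightarrow> z \<in> F"
proof -
  have "(x \<rightarrow> y) \<odot> (y \<rightarrow> z) \<in> F"
    using F assms(5,6) unfolding is_filter_def by blast
  then show ?thesis
    using F M imp_comp filter_upward by simp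
qed

lemma equiv_filter_congruence:
  assumes F: "is_filter F"
  shows "equiv M (filter_congruence F)"
proof (rule equivI)
  show "filter_congruence F \<subseteq> M \<times> M" "sym (filter_congruence F)"
    by (auto simp: filter_congruence_def sym_def)
  show "refl_on M (filter_congruence F)"
    using F imp_refl by (simp add: refl_on_def filter_congruence_def is_filter_def)
  show "trans (filter_congruence F)"
  proof (rule transI)
    fix x y z assume "(x, y) \<in> filter_congruence F" "(y, z) \<in> filter_congruence F"
    then show "(x, z) \<in> filter_congruence F"
      using filter_imp_trans[OF F, of x y z] filter_imp_trans[OF F, of z y x]
      by (simp add: filter_congruence_def)
  qed
qed

lemma filter_congruence_map_mono:
  assumes F: "is_filter F" and closed: "\<And>x. x \<in> M \<Longrightarrow> f x \<in> M"
    and mono: "\<And>x y. x \<in> M \<Longrightarrow> y \<in> M \<Longrightarrow> x \<rightarrow> y \<preceq> f x \<rightarrow> f y"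
    and xy: "(x, y) \<in> filter_congruence F"
  shows "(f x, f y) \<in> filter_congruence F"
proof -
  have M: "x \<in> M" "y \<in> M" and "x \<rightarrow> y \<in> F" "y \<rightarrow> x \<in> F"
    using xy by (simp_all add: filter_congruence_def)
  then have "f x \<rightarrow> f y \<in> F" "f y \<rightarrow> f x \<in> F"
    using filter_upward[OF F] mono closed by (simp_all add: M)
  then show ?thesis
    using M closed by (simp add: filter_congruence_def)
qed

lemma filter_congruence_map_antimono:
  assumes F: "is_filter F" and closed: "\<And>x. x \<in> M \<Longrightarrow> f x \<in> M"
    and antimono: "\<And>x y. x \<in> M \<Longrightarrow> y \<in> M \<Longrightarrow> x \<rightarrow> y \<preceq> f y \<rightarrow> f x"
    and xy: "(x, y) \<in> filter_congruence F"
  shows "(f x, f y) \<in> filter_congruence F"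
proof -
  have M: "x \<in> M" "y \<in> M" and "x \<rightarrow> y \<in> F" "y \<rightarrow> x \<in> F"
    using xy by (simp_all add: filter_congruence_def)
  then have "f x \<rightarrow> f y \<in> F" "f y \<rightarrow> f x \<in> F"
    using filter_upward[OF F] antimono closed by (simp_all add: M)
  then show ?thesis
    using M closed by (simp add: filter_congruence_def)
qed

lemma filter_congruence_compatible_comm:
  assumes F: "is_filter F"
    and closed: "\<And>x y. x \<in> M \<Longrightarrow> y \<in> M \<Longrightarrow> f x y \<in> M"
    and comm: "\<And>x y. x \<in> M \<Longrightarrow> y \<in> M \<Longrightarrow> f x y = f y x"
    and mono: "\<And>x y z. x \<in> M \<Longrightarrow> y \<in> M \<Longrightarrow> z \<in> M \<Longrightarrow> x \<rightarrow> y \<preceq> f x z \<rightarrow> f y z"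
    and "(a, b) \<in> filter_congruence F" "(c, d) \<in> filter_congruence F"
  shows "(f a c, f b d) \<in> filter_congruence F"
proof (rule trans_compatible_binary[where f = f])
  show "trans (filter_congruence F)" "filter_congruence F \<subseteq> M \<times> M"
    using F equiv_filter_congruence unfolding equiv_def refl_on_def by blast+
  show left: "(f x z, f y z) \<in> filter_congruence F" if "(x, y) \<in> filter_congruence F" "z \<in> M" for x y z
    using filter_congruence_map_mono[OF F, of "\<lambda>x. f x z"] that closed mono by blast
  show "(f z x, f z y) \<in> filter_congruence F" if "z \<in> M" "(x, y) \<in> filter_congruence F" for x y z
    using left[OF that(2,1)] that comm unfolding filter_congruence_def by auto
qed (use assms in blast)+

lemma filter_congruence_compatible_imp:
  assumes F: "is_filter F" "(a, b) \<in> filter_congruence F" "(c, d) \<in> filter_congruence F"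
  shows "(a \<rightarrow> c, b \<rightarrow> d) \<in> filter_congruence F"
proof (rule trans_compatible_binary[where f = imp])
  show "trans (filter_congruence F)" "filter_congruence F \<subseteq> M \<times> M"
    using F equiv_filter_congruence unfolding equiv_def refl_on_def by blast+
  show "(x \<rightarrow> z, y \<rightarrow> z) \<in> filter_congruence F" if "(x, y) \<in> filter_congruence F" "z \<in> M" for x y z
    using filter_congruence_map_antimono[OF F(1), of "\<lambda>x. x \<rightarrow> z"] that imp_le_imp_imp_left by simp
  show "(z \<rightarrow> x, z \<rightarrow> y) \<in> filter_congruence F" if "z \<in> M" "(x, y) \<in> filter_congruence F" for x y z
    using filter_congruence_map_mono[OF F(1), of "\<lambda>x. z \<rightarrow> x"] that imp_le_imp_imp_right by simp
qed (use assms in blast)+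

lemma filter_congruence_ne_Id:
  assumes "is_filter F" "a \<in> F" "a \<noteq> one"
  shows "filter_congruence F \<noteq> Id_on M"
proof -
  have "(a, one) \<in> filter_congruence F"
    using assms imp_one one_imp unfolding is_filter_def filter_congruence_def by auto
  then show ?thesis
    using assms(3) by auto
qed

lemma filter_congruence_inter_eq:
  assumes "F \<inter> G \<subseteq> {one}" "(c, d) \<in> filter_congruence F" "(c, d) \<in> filter_congruence G"
  shows "c = d"
  using assms le_antisym le_iff_imp_eq_one unfolding filter_congruence_def by blast

definition principal_filter :: "'a \<Rightarrow> 'a set" where
  "principal_filter a = {u \<in> M. \<exists>n. pow a n \<preceq> u}"

lemma is_filter_principal_filter:
  assumes a: "a \<in> M"
  shows "is_filter (principal_filter a)"
  unfolding is_filter_def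
proof (intro conjI ballI impI)
  show "principal_filter a \<subseteq> M"
    by (auto simp: principal_filter_def)
  show "one \<in> principal_filter a"
    using le_refl[of one] unfolding principal_filter_def by (auto intro!: exI[of _ 0])
  show "y \<in> principal_filter a" if x: "x \<in> principal_filter a" and y: "y \<in> M" "x \<preceq> y" for x y
  proof -
    obtain n where "x \<in> M" "pow a n \<preceq> x"
      using x unfolding principal_filter_def by blast
    then have "pow a n \<preceq> y"
      using a y le_trans[of "pow a n" x y] by simp
    then show ?thesis
      using y unfolding principal_filter_def by blast
  qed
  show "x \<odot> y \<in> principal_filter a" if xy: "x \<in> principal_filter a" "y \<in> principal_filter a" for x y
  proof -
    obtain n m where "x \<in> M" "y \<in> M" "pow a n \<preceq> x" "pow a m \<preceq> y"
      using xy unfolding principal_filter_def by blast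
    then have "pow a (n + m) \<preceq> x \<odot> y"
      using a mult_mono pow_add by simp
    then show ?thesis
      using \<open>x \<in> M\<close> \<open>y \<in> M\<close> unfolding principal_filter_def by (auto intro!: exI[of _ "n + m"])
  qed
qed

lemma principal_filter_self: "a \<in> M \<Longrightarrow> a \<in> principal_filter a"
  using le_refl[of a] unfolding principal_filter_def by (auto simp: mult_one intro!: exI[of _ 1])

lemma principal_filter_inter:
  assumes "a \<in> M" "b \<in> M" "join a b = one"
  shows "principal_filter a \<inter> principal_filter b \<subseteq> {one}"
proof
  fix u assume "u \<in> principal_filter a \<inter> principal_filter b"
  then obtain n m where "u \<in> M" "pow a n \<preceq> u" "pow b m \<preceq> u"
    unfolding principal_filter_def by blast
  then have "join (pow a n) (pow b m) \<preceq> u"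
    using assms join_least by simp
  then show "u \<in> {one}"
    using assms join_pow_eq_one one_le_iff \<open>u \<in> M\<close> by simp
qed

end

locale state_bl = bl_alg +
  fixes \<tau> :: "'a \<Rightarrow> 'a"
  assumes tau_closed [simp]: "x \<in> M \<Longrightarrow> \<tau> x \<in> M"
    and tau_zero: "\<tau> zero = zero"
    and tau_imp: "x \<in> M \<Longrightarrow> y \<in> M \<Longrightarrow> \<tau> (x \<rightarrow> y) = \<tau> x \<rightarrow> \<tau> (meet x y)"
    and tau_mult: "x \<in> M \<Longrightarrow> y \<in> M \<Longrightarrow> \<tau> (x \<odot> y) = \<tau> x \<odot> \<tau> (x \<rightarrow> x \<odot> y)"
    and tau_mult_tau: "x \<in> M \<Longrightarrow> y \<in> M \<Longrightarrow> \<tau> (\<tau> x \<odot> \<tau> y) = \<tau> x \<odot> \<tau> y"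
    and tau_imp_tau: "x \<in> M \<Longrightarrow> y \<in> M \<Longrightarrow> \<tau> (\<tau> x \<rightarrow> \<tau> y) = \<tau> x \<rightarrow> \<tau> y"
begin

lemma tau_one: "\<tau> one = one"
  using tau_imp[of zero zero] by (simp add: imp_refl meet_idem tau_zero)

lemma tau_mono:
  assumes "x \<in> M" "y \<in> M" "x \<preceq> y"
  shows "\<tau> x \<preceq> \<tau> y"
proof -
  have "y \<odot> (y \<rightarrow> x) = x"
    using assms divisibility[of y x] meet_commute[of x y] by (simp add: bl_le_def)
  then have "\<tau> x = \<tau> y \<odot> \<tau> (y \<rightarrow> x)"
    using assms tau_mult[of y "y \<rightarrow> x"] by simp
  then show ?thesis
    using assms mult_le_left by simp
qed

lemma tau_imp_le: "x \<in> M \<Longrightarrow> y \<in> M \<Longrightarrow> \<tau> (x \<rightarrow> y) \<preceq> \<tau> x \<rightarrow> \<tau> y"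
  using tau_imp[of x y] tau_mono[of "meet x y" y] meet_le2[of x y]
    imp_mono_right[of "\<tau> (meet x y)" "\<tau> y" "\<tau> x"] by simp

lemma tau_eq_one_upward: "s \<in> M \<Longrightarrow> t \<in> M \<Longrightarrow> s \<preceq> t \<Longrightarrow> \<tau> s = one \<Longrightarrow> \<tau> t = one"
  using tau_mono[of s t] one_le_iff[of "\<tau> t"] by simp

lemma tau_mult_eq_one:
  assumes "x \<in> M" "y \<in> M" "\<tau> x = one" "\<tau> y = one"
  shows "\<tau> (x \<odot> y) = one"
proof -
  have "y \<preceq> x \<rightarrow> x \<odot> y"
    using assms residuation[of x "x \<odot> y" y] le_refl by simp
  then have "\<tau> (x \<rightarrow> x \<odot> y) = one"
    using assms tau_eq_one_upward by simp
  then show ?thesis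
    using assms tau_mult[of x y] by (simp add: mult_one)
qed

lemma tau_pow_of_fixed:
  assumes "a \<in> M" "\<tau> a = a"
  shows "\<tau> (pow a n) = pow a n"
proof (induction n)
  case 0
  show ?case by (simp add: tau_one)
next
  case (Suc n)
  have "\<tau> (\<tau> a \<odot> \<tau> (pow a n)) = \<tau> a \<odot> \<tau> (pow a n)"
    using assms tau_mult_tau[of a "pow a n"] by simp
  then show ?case
    using assms Suc.IH by simp
qed

lemma tau_pow_of_kernel: "a \<in> M \<Longrightarrow> \<tau> a = one \<Longrightarrow> \<tau> (pow a n) = one"
  by (induction n) (simp_all add: tau_one tau_mult_eq_one)

lemma sbl_congruence_filter_congruence:
  assumes F: "is_filter F" and tau_F: "\<And>x. x \<in> F \<Longrightarrow> \<tau> x \<in> F"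
  shows "sbl_congruence M meet join (\<odot>) (\<rightarrow>) \<tau> (filter_congruence F)"
  unfolding sbl_congruence_def
proof (intro conjI allI impI)
  let ?\<theta> = "filter_congruence F"
  show "equiv M ?\<theta>"
    using F by (rule equiv_filter_congruence)
  fix a b c d assume ab: "(a, b) \<in> ?\<theta>" and cd: "(c, d) \<in> ?\<theta>"
  show "(meet a c, meet b d) \<in> ?\<theta>"
    using filter_congruence_compatible_comm[OF F meet_closed meet_commute imp_le_imp_meet ab cd] .
  show "(join a c, join b d) \<in> ?\<theta>"
    using filter_congruence_compatible_comm[OF F join_closed join_commute imp_le_imp_join ab cd] .
  show "(a \<odot> c, b \<odot> d) \<in> ?\<theta>"
    using filter_congruence_compatible_comm[OF F mult_closed mult_commute imp_le_imp_mult ab cd] .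
  show "(a \<rightarrow> c, b \<rightarrow> d) \<in> ?\<theta>"
    using filter_congruence_compatible_imp[OF F ab cd] .
next
  fix a b assume "(a, b) \<in> filter_congruence F"
  then have M: "a \<in> M" "b \<in> M" and "\<tau> (a \<rightarrow> b) \<in> F" "\<tau> (b \<rightarrow> a) \<in> F"
    using tau_F by (simp_all add: filter_congruence_def)
  then have "\<tau> a \<rightarrow> \<tau> b \<in> F" "\<tau> b \<rightarrow> \<tau> a \<in> F"
    using filter_upward[OF F] tau_imp_le by (simp_all add: M)
  then show "(\<tau> a, \<tau> b) \<in> filter_congruence F"
    using M by (simp add: filter_congruence_def)
qed

lemma principal_filter_tau_closed:
  assumes a: "a \<in> M" and dominated: "\<And>n. pow a n \<preceq> \<tau> (pow a n)"
    and u: "u \<in> principal_filter a"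
  shows "\<tau> u \<in> principal_filter a"
proof -
  obtain n where "u \<in> M" "pow a n \<preceq> u"
    using u unfolding principal_filter_def by blast
  then have "pow a n \<preceq> \<tau> u"
    using a dominated[of n] tau_mono[of "pow a n" u] le_trans[of "pow a n" "\<tau> (pow a n)" "\<tau> u"] by simp
  then show ?thesis
    using \<open>u \<in> M\<close> unfolding principal_filter_def by auto
qed

lemma subdirectly_irreducible_filters:
  assumes "sbl_subdirectly_irreducible M meet join (\<odot>) (\<rightarrow>) \<tau>"
    and "is_filter F" "\<And>x. x \<in> F \<Longrightarrow> \<tau> x \<in> F"
    and "is_filter G" "\<And>x. x \<in> G \<Longrightarrow> \<tau> x \<in> G"
    and "F \<inter> G \<subseteq> {one}"
  shows "F \<subseteq> {one} \<or> G \<subseteq> {one}"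
proof (rule ccontr)
  assume "\<not> (F \<subseteq> {one} \<or> G \<subseteq> {one})"
  then have "filter_congruence F \<noteq> Id_on M" "filter_congruence G \<noteq> Id_on M"
    using assms(2,4) filter_congruence_ne_Id by blast+
  moreover obtain c d where "c \<noteq> d" and "\<And>\<theta>. sbl_congruence M meet join (\<odot>) (\<rightarrow>) \<tau> \<theta> \<Longrightarrow>
      \<theta> \<noteq> Id_on M \<Longrightarrow> (c, d) \<in> \<theta>"
    using assms(1) unfolding sbl_subdirectly_irreducible_def by blast
  ultimately have "(c, d) \<in> filter_congruence F" "(c, d) \<in> filter_congruence G"
    using assms(2-5) sbl_congruence_filter_congruence by blast+
  then show False
    using \<open>c \<noteq> d\<close> assms(6) filter_congruence_inter_eq by blast
qed

lemma subdirectly_irreducible_le_total: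
  assumes si: "sbl_subdirectly_irreducible M meet join (\<odot>) (\<rightarrow>) \<tau>" and M: "x \<in> M" "y \<in> M"
    and "\<And>n. pow (x \<rightarrow> y) n \<preceq> \<tau> (pow (x \<rightarrow> y) n)"
    and "\<And>n. pow (y \<rightarrow> x) n \<preceq> \<tau> (pow (y \<rightarrow> x) n)"
  shows "x \<preceq> y \<or> y \<preceq> x"
proof -
  have "principal_filter (x \<rightarrow> y) \<inter> principal_filter (y \<rightarrow> x) \<subseteq> {one}"
    using M prelinearity principal_filter_inter by simp
  then have "principal_filter (x \<rightarrow> y) \<subseteq> {one} \<or> principal_filter (y \<rightarrow> x) \<subseteq> {one}"
    using subdirectly_irreducible_filters[OF si] M assms(4,5)
      is_filter_principal_filter principal_filter_tau_closed by simp
  then have "x \<rightarrow> y = one \<or> y \<rightarrow> x = one"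
    using M principal_filter_self[of "x \<rightarrow> y"] principal_filter_self[of "y \<rightarrow> x"] by auto
  then show ?thesis
    using M le_iff_imp_eq_one by blast
qed

lemma linearly_ordered_tau_image:
  assumes "sbl_subdirectly_irreducible M meet join (\<odot>) (\<rightarrow>) \<tau>"
  shows "linearly_ordered_subset meet (\<tau> ` M)"
  unfolding linearly_ordered_subset_def
proof (intro ballI)
  fix x y assume "x \<in> \<tau> ` M" "y \<in> \<tau> ` M"
  then obtain u v where uv: "u \<in> M" "v \<in> M" "x = \<tau> u" "y = \<tau> v" by blast
  then have "\<tau> (x \<rightarrow> y) = x \<rightarrow> y" "\<tau> (y \<rightarrow> x) = y \<rightarrow> x"
    by (simp_all add: tau_imp_tau)
  then show "x \<preceq> y \<or> y \<preceq> x"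
    using assms uv subdirectly_irreducible_le_total tau_pow_of_fixed le_refl by simp
qed

lemma linearly_ordered_state_kernel:
  assumes "sbl_subdirectly_irreducible M meet join (\<odot>) (\<rightarrow>) \<tau>"
  shows "linearly_ordered_subset meet (state_kernel M one \<tau>)"
  unfolding linearly_ordered_subset_def
proof (intro ballI)
  fix x y assume "x \<in> state_kernel M one \<tau>" "y \<in> state_kernel M one \<tau>"
  then have xy: "x \<in> M" "y \<in> M" "\<tau> x = one" "\<tau> y = one"
    unfolding state_kernel_def by auto
  then have "\<tau> (x \<rightarrow> y) = one" "\<tau> (y \<rightarrow> x) = one"
    using tau_eq_one_upward[of y "x \<rightarrow> y"] tau_eq_one_upward[of x "y \<rightarrow> x"] le_imp by simp_all
  then show "x \<preceq> y \<or> y \<preceq> x"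
    using assms xy subdirectly_irreducible_le_total tau_pow_of_kernel le_one by simp
qed

end

lemma state_bl_if_state_bl_algebra:
  "state_bl_algebra M meet join mult imp zero one \<tau> \<Longrightarrow> state_bl M meet join mult imp zero one \<tau>"
  unfolding state_bl_algebra_def bl_algebra_def state_operator_def by unfold_locales meson+

theorem lemma2p2:
  assumes "state_bl_algebra M meet join mult imp zero one \<tau>"
    and "sbl_subdirectly_irreducible M meet join mult imp \<tau>"
  shows "linearly_ordered_subset meet (\<tau> ` M) \<and> linearly_ordered_subset meet (state_kernel M one \<tau>)"
proof -
  interpret state_bl M meet join mult imp zero one \<tau>
    using assms(1) by (rule state_bl_if_state_bl_algebra)
  show ?thesis
    using assms(2) linearly_ordered_tau_image linearly_ordered_state_kernel by simp
qed

end
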